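(* Let $\{\mathcal T^+,\mathcal T^-\}$ be a closed orientation of a medium with $n$ states. Then for any state $S$, at most $\log_2 n$ tokens in $\mathcal T^+$ are effective for $S$.
   Context: A medium consists of a finite set of states and a set $\mathcal T$ of tokens, each token $t$ acting as a function on states, written $S\mapsto St$. Tokens concatenate into messages (words); $Sw$ denotes the state obtained by applying the tokens of $w$ successively to $S$. A token $t$ has a reverse $\tilde t$ if for any two distinct states $S\neq Q$, $St=Q$ iff $Q\tilde t=S$. A message is inconsistent if it contains some token together with its reverse, and consistent otherwise. A message $w$ is vacuous if for each token $t$ it contains equally many copies of $t$ and $\tilde t$. A token $t$ is effective for $S$ if $St\neq S$; a message is stepwise effective for $S$ if each successive token is effective for the state it is applied to. The axioms of a medium are: (1) each token has a unique reverse; (2) for any two distinct states $S,Q$ there is a consistent message $w$ with $Sw=Q$; (3) if $w$ is stepwise effective for $S$, then $Sw=S$ iff $w$ is vacuous; (4) if $Sw=Qz$, $w$ is stepwise effective for $S$, $z$ is stepwise effective for $Q$, and both $w,z$ are consistent, then $wz$ is consistent. An orientation is a partition $\{\mathcal T^+,\mathcal T^-\}$ of $\mathcal T$ such that for each token $t$ exactly one of $t,\tilde t$ lies in $\mathcal T^+$ (the positive tokens). An orientation is closed if whenever two positive tokens $t,t'$ are both effective for a state $S$, the messages $tt'$ and $t't$ are stepwise effective for $S$. *)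

theory Defs
  imports Complex_Main
begin

definition apply_msg :: "('t \<Rightarrow> 'a \<Rightarrow> 'a) \<Rightarrow> 'a \<Rightarrow> 't list \<Rightarrow> 'a" where
  "apply_msg act s w = fold act w s"

definition is_reverse :: "'a set \<Rightarrow> ('t \<Rightarrow> 'a \<Rightarrow> 'a) \<Rightarrow> 't \<Rightarrow> 't \<Rightarrow> bool" where
  "is_reverse S act t u \<longleftrightarrow>
     (\<forall>P\<in>S. \<forall>Q\<in>S. P \<noteq> Q \<longrightarrow> (act t P = Q \<longleftrightarrow> act u Q = P))"

definition rev_tok :: "'a set \<Rightarrow> 't set \<Rightarrow> ('t \<Rightarrow> 'a \<Rightarrow> 'a) \<Rightarrow> 't \<Rightarrow> 't" where
  "rev_tok S T act t = (THE u. u \<in> T \<and> is_reverse S act t u)"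

definition consistent :: "'a set \<Rightarrow> 't set \<Rightarrow> ('t \<Rightarrow> 'a \<Rightarrow> 'a) \<Rightarrow> 't list \<Rightarrow> bool" where
  "consistent S T act w \<longleftrightarrow> \<not> (\<exists>t\<in>set w. rev_tok S T act t \<in> set w)"

definition vacuous :: "'a set \<Rightarrow> 't set \<Rightarrow> ('t \<Rightarrow> 'a \<Rightarrow> 'a) \<Rightarrow> 't list \<Rightarrow> bool" where
  "vacuous S T act w \<longleftrightarrow>
     (\<forall>t\<in>T. count_list w t = count_list w (rev_tok S T act t))"

definition effective :: "('t \<Rightarrow> 'a \<Rightarrow> 'a) \<Rightarrow> 't \<Rightarrow> 'a \<Rightarrow> bool" where
  "effective act t s \<longleftrightarrow> act t s \<noteq> s"

fun stepwise_effective :: "('t \<Rightarrow> 'a \<Rightarrow> 'a) \<Rightarrow> 't list \<Rightarrow> 'a \<Rightarrow> bool" where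
  "stepwise_effective act [] s = True"
| "stepwise_effective act (t # w) s \<longleftrightarrow> act t s \<noteq> s \<and> stepwise_effective act w (act t s)"

definition medium :: "'a set \<Rightarrow> 't set \<Rightarrow> ('t \<Rightarrow> 'a \<Rightarrow> 'a) \<Rightarrow> bool" where
  "medium S T act \<longleftrightarrow>
     finite S \<and>
     (\<forall>t\<in>T. \<forall>s\<in>S. act t s \<in> S) \<and>
     \<comment> \<open>(1) unique reverse\<close>
     (\<forall>t\<in>T. \<exists>!u. u \<in> T \<and> is_reverse S act t u) \<and>
     \<comment> \<open>(2) reachability by a consistent message\<close>
     (\<forall>P\<in>S. \<forall>Q\<in>S. P \<noteq> Q \<longrightarrow>
        (\<exists>w. set w \<subseteq> T \<and> consistent S T act w \<and> apply_msg act P w = Q)) \<and>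
     \<comment> \<open>(3) stepwise effective returns iff vacuous\<close>
     (\<forall>P\<in>S. \<forall>w. set w \<subseteq> T \<longrightarrow> stepwise_effective act w P \<longrightarrow>
        (apply_msg act P w = P \<longleftrightarrow> vacuous S T act w)) \<and>
     \<comment> \<open>(4)\<close>
     (\<forall>P\<in>S. \<forall>Q\<in>S. \<forall>w z. set w \<subseteq> T \<longrightarrow> set z \<subseteq> T \<longrightarrow>
        apply_msg act P w = apply_msg act Q z \<longrightarrow>
        stepwise_effective act w P \<longrightarrow> stepwise_effective act z Q \<longrightarrow>
        consistent S T act w \<longrightarrow> consistent S T act z \<longrightarrow>
        consistent S T act (w @ z))"

definition orientation :: "'a set \<Rightarrow> 't set \<Rightarrow> ('t \<Rightarrow> 'a \<Rightarrow> 'a) \<Rightarrow> 't set \<Rightarrow> bool" where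
  "orientation S T act Tp \<longleftrightarrow> Tp \<subseteq> T \<and>
     (\<forall>t\<in>T. (t \<in> Tp) \<noteq> (rev_tok S T act t \<in> Tp))"

definition closed_orientation :: "'a set \<Rightarrow> 't set \<Rightarrow> ('t \<Rightarrow> 'a \<Rightarrow> 'a) \<Rightarrow> 't set \<Rightarrow> bool" where
  "closed_orientation S T act Tp \<longleftrightarrow> orientation S T act Tp \<and>
     (\<forall>s\<in>S. \<forall>t\<in>Tp. \<forall>t'\<in>Tp. t \<noteq> t' \<longrightarrow> effective act t s \<longrightarrow> effective act t' s \<longrightarrow>
        stepwise_effective act [t, t'] s \<and> stepwise_effective act [t', t] s)"

end

theory Submission
  imports Defs
begin

text \<open>Let \<open>E\<close> be the set of positive tokens effective for \<open>S\<close>. By closedness, the tokens of any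
subset \<open>A \<subseteq> E\<close>, applied to \<open>S\<close> in any order, form a stepwise effective message; let \<open>S\<^sub>A\<close> be the
state reached. If \<open>S\<^sub>A = S\<^sub>B\<close>, then the message for \<open>A\<close> followed by the message for \<open>B\<close> walked
backwards (reversed, with every token replaced by its reverse) is a stepwise effective closed walk
at \<open>S\<close>, hence vacuous by axiom (3). A token of \<open>A\<close> is positive, so its reverse cannot occur in
the first part, and it occurs in the second part only if the token lies in \<open>B\<close>. Hence \<open>A = B\<close>, so \<open>A \<mapsto> S\<^sub>A\<close> is injective and \<open>2\<^bsup>|E|\<^esup> \<le> n\<close>.\<close>

lemma apply_msg_Nil [simp]: "apply_msg act s [] = s"
  by (simp add: apply_msg_def)

lemma apply_msg_Cons [simp]: "apply_msg act s (t # w) = apply_msg act (act t s) w"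
  by (simp add: apply_msg_def)

lemma apply_msg_append [simp]: "apply_msg act s (u @ v) = apply_msg act (apply_msg act s u) v"
  by (simp add: apply_msg_def)

lemma stepwise_effective_append:
  "stepwise_effective act (u @ v) s \<longleftrightarrow>
     stepwise_effective act u s \<and> stepwise_effective act v (apply_msg act s u)"
  by (induction u arbitrary: s) auto

lemma medium_finite: "medium S T act \<Longrightarrow> finite S"
  by (simp add: medium_def)

lemma medium_act_in_states: "medium S T act \<Longrightarrow> t \<in> T \<Longrightarrow> s \<in> S \<Longrightarrow> act t s \<in> S"
  by (simp add: medium_def)

lemma medium_apply_msg_in_states:
  assumes "medium S T act" "set w \<subseteq> T" "s \<in> S"
  shows "apply_msg act s w \<in> S"
  using assms(2,3) by (induction w arbitrary: s) (auto simp: medium_act_in_states[OF assms(1)])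

lemma medium_vacuous_if_returns:
  assumes "medium S T act" "s \<in> S" "set w \<subseteq> T" "stepwise_effective act w s"
    and "apply_msg act s w = s"
  shows "vacuous S T act w"
proof -
  have "\<forall>P\<in>S. \<forall>w. set w \<subseteq> T \<longrightarrow> stepwise_effective act w P \<longrightarrow>
      (apply_msg act P w = P \<longleftrightarrow> vacuous S T act w)"
    using assms(1) unfolding medium_def by (elim conjE)
  with assms(2-5) show ?thesis by blast
qed

lemma medium_ex1_reverse: "medium S T act \<Longrightarrow> t \<in> T \<Longrightarrow> \<exists>!u. u \<in> T \<and> is_reverse S act t u"
  by (simp add: medium_def)

lemma medium_rev_tok:
  assumes "medium S T act" "t \<in> T"
  shows "rev_tok S T act t \<in> T" and "is_reverse S act t (rev_tok S T act t)"
proof -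
  from medium_ex1_reverse[OF assms] have "rev_tok S T act t \<in> T \<and> is_reverse S act t (rev_tok S T act t)"
    unfolding rev_tok_def by (rule theI')
  then show "rev_tok S T act t \<in> T" and "is_reverse S act t (rev_tok S T act t)"
    by auto
qed

lemma medium_rev_tok_rev_tok:
  assumes "medium S T act" "t \<in> T"
  shows "rev_tok S T act (rev_tok S T act t) = t"
proof -
  let ?u = "rev_tok S T act t"
  have "is_reverse S act ?u t"
    using medium_rev_tok(2)[OF assms] unfolding is_reverse_def by metis
  moreover have "\<exists>!v. v \<in> T \<and> is_reverse S act ?u v"
    using medium_ex1_reverse[OF assms(1) medium_rev_tok(1)[OF assms]] .
  ultimately show ?thesis
    unfolding rev_tok_def[of S T act ?u] using assms(2) by (blast intro: the1_equality)
qed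

lemma medium_rev_tok_undoes:
  assumes "medium S T act" "t \<in> T" "s \<in> S" "effective act t s"
  shows "act (rev_tok S T act t) (act t s) = s"
  using medium_rev_tok(2)[OF assms(1,2)] medium_act_in_states[OF assms(1-3)] assms(3,4)
  unfolding is_reverse_def effective_def by metis

definition reverse_msg :: "'a set \<Rightarrow> 't set \<Rightarrow> ('t \<Rightarrow> 'a \<Rightarrow> 'a) \<Rightarrow> 't list \<Rightarrow> 't list" where
  "reverse_msg S T act w = map (rev_tok S T act) (rev w)"

lemma medium_reverse_msg_walks_back:
  assumes "medium S T act" "set w \<subseteq> T" "s \<in> S" "stepwise_effective act w s"
  shows "stepwise_effective act (reverse_msg S T act w) (apply_msg act s w)
    \<and> apply_msg act (apply_msg act s w) (reverse_msg S T act w) = s"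
  using assms(2-4)
proof (induction w arbitrary: s)
  case (Cons t w)
  have "t \<in> T" "effective act t s" "act t s \<in> S"
    using Cons.prems medium_act_in_states[OF assms(1)] by (auto simp: effective_def)
  with Cons show ?case
    using medium_rev_tok_undoes[OF assms(1)]
    by (auto simp: reverse_msg_def stepwise_effective_append effective_def)
qed (simp add: reverse_msg_def)

lemma closed_orientation_positive_msg_stepwise_effective:
  assumes "medium S T act" "closed_orientation S T act Tp"
    and "distinct w" "set w \<subseteq> Tp" "s \<in> S" "\<forall>t\<in>set w. effective act t s"
  shows "stepwise_effective act w s"
  using assms(3-6)
proof (induction w arbitrary: s)
  case (Cons t w)
  have "Tp \<subseteq> T"
    using assms(2) unfolding closed_orientation_def orientation_def by blast
  with Cons.prems have "act t s \<in> S"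
    by (auto intro: medium_act_in_states[OF assms(1)])
  moreover have "effective act t' (act t s)" if "t' \<in> set w" for t'
  proof -
    have "t \<noteq> t'" "t \<in> Tp" "t' \<in> Tp" "effective act t s" "effective act t' s"
      using Cons.prems that by auto
    then have "stepwise_effective act [t, t'] s"
      using assms(2) Cons.prems(3) unfolding closed_orientation_def by blast
    then show ?thesis by (simp add: effective_def)
  qed
  ultimately show ?case
    using Cons by (simp add: effective_def)
qed simp

lemma orientation_positive_msgs_same_target_subset:
  assumes "medium S T act" "orientation S T act Tp" "s \<in> S"
    and "set w \<subseteq> Tp" "set z \<subseteq> Tp"
    and "stepwise_effective act w s" "stepwise_effective act z s"
    and "apply_msg act s w = apply_msg act s z"
  shows "set w \<subseteq> set z"
proof
  fix t assume "t \<in> set w"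
  let ?rv = "rev_tok S T act"
  let ?loop = "w @ reverse_msg S T act z"
  have Tp_sub: "Tp \<subseteq> T" and orient: "\<And>t. t \<in> T \<Longrightarrow> (t \<in> Tp) \<noteq> (?rv t \<in> Tp)"
    using assms(2) unfolding orientation_def by auto
  have t: "t \<in> Tp" "t \<in> T"
    using \<open>t \<in> set w\<close> assms(4) Tp_sub by auto
  have "set ?loop \<subseteq> T"
    using assms(4,5) Tp_sub medium_rev_tok(1)[OF assms(1)] by (auto simp: reverse_msg_def)
  moreover have "stepwise_effective act ?loop s" and "apply_msg act s ?loop = s"
    using medium_reverse_msg_walks_back[OF assms(1) _ assms(3,7)] assms(5,6,8) Tp_sub
    by (auto simp: stepwise_effective_append)
  ultimately have "vacuous S T act ?loop"
    using medium_vacuous_if_returns[OF assms(1,3)] by blast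
  then have "count_list ?loop (?rv t) = count_list ?loop t"
    using t(2) unfolding vacuous_def by metis
  also have "count_list ?loop t \<noteq> 0"
    using \<open>t \<in> set w\<close> by (simp add: count_list_0_iff)
  finally have "?rv t \<in> set w \<or> ?rv t \<in> ?rv ` set z"
    by (auto simp: count_list_0_iff reverse_msg_def)
  moreover have "?rv t \<notin> set w"
    using orient[OF t(2)] t(1) assms(4) by blast
  ultimately obtain t' where "t' \<in> set z" "?rv t = ?rv t'"
    by auto
  then show "t \<in> set z"
    using medium_rev_tok_rev_tok[OF assms(1)] t(2) assms(5) Tp_sub by (metis subsetD)
qed

lemma closed_orientation_two_pow_card_effective_le:
  assumes "medium S T act" "closed_orientation S T act Tp" "s \<in> S"
    and E_def: "E = {t \<in> Tp. effective act t s}" and "finite E"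
  shows "2 ^ card E \<le> card S"
proof -
  obtain xs where xs: "distinct xs" "set xs = E"
    using \<open>finite E\<close> finite_distinct_list by blast
  define msg where "msg A = filter (\<lambda>t. t \<in> A) xs" for A
  have msg_set: "set (msg A) = A" if "A \<subseteq> E" for A
    using that xs(2) by (auto simp: msg_def)
  have msg_positive: "set (msg A) \<subseteq> Tp" for A
    using xs(2) E_def by (auto simp: msg_def)
  have msg_effective: "stepwise_effective act (msg A) s" for A
    using xs E_def
    by (intro closed_orientation_positive_msg_stepwise_effective[OF assms(1,2) _ _ assms(3)])
       (auto simp: msg_def)
  have orient: "orientation S T act Tp"
    using assms(2) by (simp add: closed_orientation_def)
  have "inj_on (\<lambda>A. apply_msg act s (msg A)) (Pow E)"
  proof (rule inj_onI)
    fix A B assume "A \<in> Pow E" "B \<in> Pow E" and eq: "apply_msg act s (msg A) = apply_msg act s (msg B)"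
    then show "A = B"
      using orientation_positive_msgs_same_target_subset[OF assms(1) orient assms(3)
          msg_positive msg_positive msg_effective msg_effective]
        msg_set by (metis PowD eq subset_antisym)
  qed
  moreover have "(\<lambda>A. apply_msg act s (msg A)) ` Pow E \<subseteq> S"
    using msg_positive assms(2) medium_apply_msg_in_states[OF assms(1) _ assms(3)]
    unfolding closed_orientation_def orientation_def by blast
  ultimately have "card (Pow E) \<le> card S"
    using card_inj_on_le medium_finite[OF assms(1)] by blast
  then show ?thesis
    using \<open>finite E\<close> by (simp add: card_Pow)
qed

theorem mainTheorem6:
  fixes S :: "'a set" and T Tp :: "'t set" and act :: "'t \<Rightarrow> 'a \<Rightarrow> 'a" and s :: 'a
  assumes "medium S T act"
    and "closed_orientation S T act Tp"
    and "s \<in> S"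
  shows "real (card {t \<in> Tp. effective act t s}) \<le> log 2 (real (card S))"
proof (cases "finite {t \<in> Tp. effective act t s}")
  case True
  then show ?thesis
    using closed_orientation_two_pow_card_effective_le[OF assms refl] le_log2_of_power by blast
next
  case False
  \<comment> \<open>\<open>Tp\<close> may be infinite, and then \<open>card\<close> of the infinite set of effective tokens is \<open>0\<close>.\<close>
  have "card S \<ge> 1"
    using assms(3) medium_finite[OF assms(1)] by (metis Suc_leI card_gt_0_iff empty_iff One_nat_def)
  then show ?thesis
    using False by simp
qed

end
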